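(* Let $p\ge5$ be prime, $a\in\mathbb{C}_p$, $a\ne0$, $A=|a|_p$, $f(x)=\frac{ax}{x^2+a}$, and $t_1=\sqrt{-2a}$, $t_2=-\sqrt{-2a}$. Then for every $0<r<\sqrt A$, $$f(S_r(t_1)\setminus\mathcal P_2)\subseteq S_r(t_2),\qquad f(S_r(t_2)\setminus\mathcal P_2)\subseteq S_r(t_1).$$
   Context: $S_r(t)=\{x\in\mathbb{C}_p:|x-t|_p=r\}$. $\mathcal P_2=\{x\in\mathbb{C}_p:\exists n\in\mathbb{N},\ f^n(x)\in\{\pm\sqrt{-a},\ \pm\sqrt{(-3\pm\sqrt5)a/2}\}\}$. The points $t_1,t_2$ form a $2$-cycle of $f$. *)

theory Defs
  imports Complex_Main "HOL-Computational_Algebra.Polynomial" "HOL-Computational_Algebra.Factorial_Ring"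
begin

text \<open>C_p is characterised up to isometric isomorphism: a field of characteristic 0
with an absolute value that is non-archimedean, restricts to the p-adic absolute value
on the integers (hence on Q), is complete, algebraically closed, and in which the
algebraic numbers (algebraic closure of Q) are dense.\<close>

definition is_Cp :: "nat \<Rightarrow> ('a::field_char_0 \<Rightarrow> real) \<Rightarrow> bool" where
  "is_Cp p absv \<longleftrightarrow>
     (\<forall>x. absv x \<ge> 0) \<and>
     (\<forall>x. absv x = 0 \<longleftrightarrow> x = 0) \<and>
     (\<forall>x y. absv (x * y) = absv x * absv y) \<and>
     (\<forall>x y. absv (x + y) \<le> max (absv x) (absv y)) \<and>
     (\<forall>n::int. n \<noteq> 0 \<longrightarrow> absv (of_int n) = real p powr (- real (multiplicity (int p) n))) \<and>
     (\<forall>X::nat \<Rightarrow> 'a. (\<forall>e>0. \<exists>N. \<forall>m\<ge>N. \<forall>n\<ge>N. absv (X m - X n) < e) \<longrightarrow>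
         (\<exists>L. \<forall>e>0. \<exists>N. \<forall>n\<ge>N. absv (X n - L) < e)) \<and>
     (\<forall>q::'a poly. degree q > 0 \<longrightarrow> (\<exists>z. poly q z = 0)) \<and>
     (\<forall>x. \<forall>e>0. \<exists>y. absv (x - y) < e \<and>
         (\<exists>q::int poly. q \<noteq> 0 \<and> poly (map_poly of_int q) y = 0))"

definition sphere_p :: "('a::field_char_0 \<Rightarrow> real) \<Rightarrow> 'a \<Rightarrow> real \<Rightarrow> 'a set" where
  "sphere_p absv t r = {x. absv (x - t) = r}"

definition fmap :: "'a::field_char_0 \<Rightarrow> 'a \<Rightarrow> 'a" where
  "fmap a x = a * x / (x^2 + a)"

definition targets2 :: "'a::field_char_0 \<Rightarrow> 'a set" where
  "targets2 a = {z. z^2 = - a \<or> (\<exists>s. s^2 = 5 \<and> z^2 = (-3 + s) * a / 2)}"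

definition P2 :: "'a::field_char_0 \<Rightarrow> 'a set" where
  "P2 a = {x. \<exists>n::nat. (fmap a ^^ n) x \<in> targets2 a}"

end

theory Submission
  imports Defs
begin

text \<open>Write \<open>x = t + h\<close> with \<open>t\<^sup>2 = -2a\<close>. Then \<open>x\<^sup>2 + a = -a + 2th + h\<^sup>2\<close> and
  \<open>f(x) + t = h (th - 3a) / (x\<^sup>2 + a)\<close>. Since \<open>|t| = \<surd>A\<close> and \<open>|h| < \<surd>A\<close>, the terms \<open>th\<close>
  and \<open>h\<^sup>2\<close> are dominated by \<open>a\<close>, so by the strict ultrametric inequality both \<open>th - 3a\<close>
  and \<open>x\<^sup>2 + a\<close> have absolute value exactly \<open>A\<close> (here \<open>|2| = |3| = 1\<close> because \<open>p \<ge> 5\<close>).\<close>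

locale ultrametric_abs =
  fixes absv :: "'a::field \<Rightarrow> real"
  assumes absv_nonneg: "absv x \<ge> 0"
    and absv_eq_0_iff: "absv x = 0 \<longleftrightarrow> x = 0"
    and absv_mult: "absv (x * y) = absv x * absv y"
    and absv_add_le_max: "absv (x + y) \<le> max (absv x) (absv y)"
begin

lemma absv_zero [simp]: "absv 0 = 0"
  by (simp add: absv_eq_0_iff)

lemma absv_one: "absv 1 = 1"
  using absv_mult[of 1 1] absv_eq_0_iff[of 1] by simp

lemma absv_minus: "absv (- x) = absv x"
proof -
  have "absv (-1) * absv (-1) = 1"
    using absv_mult[of "-1" "-1"] absv_one by simp
  then have "absv (-1) = 1"
    using absv_nonneg[of "-1"] by (auto simp: square_eq_1_iff)
  then show ?thesis
    using absv_mult[of "-1" x] by simp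
qed

lemma absv_divide: "absv (x / y) = absv x / absv y"
proof (cases "y = 0")
  case False
  then have "absv (x / y) * absv y = absv x"
    using absv_mult[of "x / y" y] by simp
  with False show ?thesis
    using absv_eq_0_iff[of y] by (simp add: field_simps)
qed simp

lemma absv_add_eq_left:
  assumes "absv y < absv x"
  shows "absv (x + y) = absv x"
proof (rule antisym)
  show "absv (x + y) \<le> absv x"
    using absv_add_le_max[of x y] assms by simp
  have "absv x \<le> max (absv (x + y)) (absv (- y))"
    using absv_add_le_max[of "x + y" "- y"] by simp
  with assms show "absv x \<le> absv (x + y)"
    by (auto simp: absv_minus max_def split: if_splits)
qed

lemma absv_add_less:
  assumes "absv x < c" and "absv y < c"
  shows "absv (x + y) < c"
  using absv_add_le_max[of x y] assms by simp

end

lemma is_Cp_ultrametric_abs: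
  assumes "is_Cp p absv"
  shows "ultrametric_abs absv"
  using assms unfolding is_Cp_def by unfold_locales blast+

lemma is_Cp_absv_of_int_unit:
  assumes "is_Cp p absv" and "prime p" and "\<not> int p dvd n"
  shows "absv (of_int n) = 1"
proof -
  have "n \<noteq> 0"
    using assms(3) by auto
  then have "absv (of_int n) = real p powr (- real (multiplicity (int p) n))"
    using assms(1) unfolding is_Cp_def by blast
  moreover have "multiplicity (int p) n = 0"
    using assms(3) by (rule not_dvd_imp_multiplicity_0)
  ultimately show ?thesis
    using prime_gt_0_nat[OF assms(2)] by simp
qed

lemma is_Cp_absv_small_int:
  assumes "is_Cp p absv" and "prime p" and "0 < n" and "n < int p"
  shows "absv (of_int n) = 1"
proof (rule is_Cp_absv_of_int_unit[OF assms(1,2)])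
  show "\<not> int p dvd n"
    using zdvd_imp_le[of "int p" n] assms(3,4) by linarith
qed

lemma fmap_shift_identity:
  fixes a t x :: "'a::field_char_0"
  assumes "t\<^sup>2 = -2 * a"
  shows "x\<^sup>2 + a = - a + (2 * t * (x - t) + (x - t)\<^sup>2)"
    and "x\<^sup>2 + a \<noteq> 0 \<Longrightarrow> fmap a x + t = (x - t) * (t * (x - t) - 3 * a) / (x\<^sup>2 + a)"
proof -
  have root: "t\<^sup>2 + 2 * a = 0"
    using assms by simp
  have "x\<^sup>2 + a = - a + (2 * t * (x - t) + (x - t)\<^sup>2) + (t\<^sup>2 + 2 * a)"
    by (simp add: power2_eq_square algebra_simps)
  then show "x\<^sup>2 + a = - a + (2 * t * (x - t) + (x - t)\<^sup>2)"
    using root by simp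
  have "a * x + t * (x\<^sup>2 + a) = (x - t) * (t * (x - t) - 3 * a) + (2 * x - t) * (t\<^sup>2 + 2 * a)"
    by (simp add: power2_eq_square algebra_simps)
  then have num: "a * x + t * (x\<^sup>2 + a) = (x - t) * (t * (x - t) - 3 * a)"
    using root by simp
  assume "x\<^sup>2 + a \<noteq> 0"
  then have "fmap a x + t = (a * x + t * (x\<^sup>2 + a)) / (x\<^sup>2 + a)"
    unfolding fmap_def by (simp add: divide_add_eq_iff)
  then show "fmap a x + t = (x - t) * (t * (x - t) - 3 * a) / (x\<^sup>2 + a)"
    by (simp only: num)
qed

lemma absv_fmap_add_root:
  fixes absv :: "'a::field_char_0 \<Rightarrow> real"
  assumes "ultrametric_abs absv"
    and two: "absv 2 = 1" and three: "absv 3 = 1"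
    and "a \<noteq> 0" and root: "t\<^sup>2 = -2 * a"
    and close: "absv (x - t) < sqrt (absv a)"
  shows "absv (fmap a x + t) = absv (x - t)"
proof -
  interpret ultrametric_abs absv by fact
  define h where "h = x - t"
  define A where "A = absv a"
  have A_pos: "A > 0"
    using \<open>a \<noteq> 0\<close> absv_nonneg[of a] absv_eq_0_iff[of a] unfolding A_def by linarith
  have "absv t * absv t = A"
    using arg_cong[OF root, of absv] two
    by (simp add: power2_eq_square absv_mult absv_minus A_def)
  then have abs_t: "absv t = sqrt A"
    using absv_nonneg[of t] by (metis abs_of_nonneg real_sqrt_abs2)
  have sqrt_A_pos: "sqrt A > 0"
    using A_pos by simp
  have abs_h: "absv h < sqrt A"
    using close unfolding h_def A_def .
  have th_small: "absv (t * h) < A"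
  proof -
    have "absv (t * h) = sqrt A * absv h"
      by (simp only: absv_mult abs_t)
    also have "\<dots> < sqrt A * sqrt A"
      using abs_h sqrt_A_pos by (rule mult_strict_left_mono)
    finally show ?thesis
      using A_pos by simp
  qed
  have hh_small: "absv (h\<^sup>2) < A"
  proof -
    have "absv (h\<^sup>2) = absv h * absv h"
      by (simp only: power2_eq_square absv_mult)
    also have "\<dots> < sqrt A * sqrt A"
      using abs_h absv_nonneg[of h] sqrt_A_pos by (intro mult_strict_mono) auto
    finally show ?thesis
      using A_pos by simp
  qed
  have "absv (- (3 * a) + t * h) = absv (- (3 * a))"
    using th_small by (intro absv_add_eq_left) (simp only: absv_minus absv_mult three A_def mult_1)
  then have num: "absv (t * h - 3 * a) = A"
    by (simp only: absv_minus absv_mult three A_def mult_1 diff_conv_add_uminus add.commute)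
  have "absv (2 * t * h + h\<^sup>2) < absv (- a)"
    using absv_add_less[OF _ hh_small, of "2 * t * h"] th_small
    by (simp only: absv_minus absv_mult two A_def mult_1 mult.assoc)
  then have "absv (- a + (2 * t * h + h\<^sup>2)) = A"
    unfolding A_def by (subst absv_add_eq_left) (simp_all only: absv_minus)
  then have den: "absv (x\<^sup>2 + a) = A"
    using fmap_shift_identity(1)[OF root, of x] by (simp only: h_def)
  then have "x\<^sup>2 + a \<noteq> 0"
    using A_pos absv_eq_0_iff by auto
  then have "fmap a x + t = h * (t * h - 3 * a) / (x\<^sup>2 + a)"
    using fmap_shift_identity(2)[OF root] by (simp only: h_def)
  then show ?thesis
    unfolding h_def[symmetric] using num den A_pos by (simp add: absv_divide absv_mult)
qed

lemma fmap_sphere_p_to_neg: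
  fixes absv :: "'a::field_char_0 \<Rightarrow> real"
  assumes "ultrametric_abs absv" and "absv 2 = 1" and "absv 3 = 1" and "a \<noteq> 0" and "t\<^sup>2 = -2 * a"
    and "r < sqrt (absv a)"
  shows "fmap a ` sphere_p absv t r \<subseteq> sphere_p absv (- t) r"
  using absv_fmap_add_root[OF assms(1-5)] assms(6) unfolding sphere_p_def by auto

theorem theorem4p4:
  fixes p :: nat and absv :: "'a::field_char_0 \<Rightarrow> real" and a t1 t2 :: 'a and r :: real
  assumes "prime p" and "p \<ge> 5"
    and "is_Cp p absv"
    and "a \<noteq> 0"
    and "t1^2 = -2 * a" and "t2 = - t1"
    and "0 < r" and "r < sqrt (absv a)"
  shows "fmap a ` (sphere_p absv t1 r - P2 a) \<subseteq> sphere_p absv t2 r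
       \<and> fmap a ` (sphere_p absv t2 r - P2 a) \<subseteq> sphere_p absv t1 r"
proof -
  have ultra: "ultrametric_abs absv"
    using assms(3) by (rule is_Cp_ultrametric_abs)
  have "absv 2 = 1" and "absv 3 = 1"
    using is_Cp_absv_small_int[OF assms(3,1), of 2] is_Cp_absv_small_int[OF assms(3,1), of 3]
      assms(2) by simp_all
  moreover have "t2\<^sup>2 = -2 * a"
    using assms(5,6) by simp
  ultimately show ?thesis
    using fmap_sphere_p_to_neg[OF ultra, of a t1 r] fmap_sphere_p_to_neg[OF ultra, of a t2 r] assms(4-6,8) by auto
qed

end
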